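(* Let $n\ge2$ and let $x\in\mathbb{C}^{n\times n}$ be generic (as defined in the context). For each $1\le k\le n$ fix an ordering $\mu^{(k)}_1,\ldots,\mu^{(k)}_k$ of the eigenvalues of $x_k$ (note $x^T$ has the same leading principal eigenvalues, so $x^T$ is also generic and the same orderings are used for it). Let $b_m$ ($1\le m\le n-1$) be the dual coordinates of $x$ and $\tilde b_m$ those of $x^{T}$, defined with respect to these orderings. Then for $1\le m\le n-1$, \[ \operatorname{diag}(\tilde b_m)=\Pi_m\operatorname{diag}(b_m)^{-1}\Sigma_m, \] where $\Sigma_m=-P_{m+1}(\Lambda_m)\bigl(P_m'(\Lambda_m)\bigr)^{-1}$ and $\Pi_m$ is the $m\times m$ diagonal matrix defined in the context.
   Context: For a square matrix $x$, $x_k$ is its leading principal $k\times k$ submatrix, $E(x_k)$ its eigenvalue multiset, and $P_k(\lambda)=\det(\lambda I_k-x_k)$. A matrix $x\in\mathbb{C}^{n\times n}$ is generic if for every $1\le k\le n$ the eigenvalues of $x_k$ are distinct and for every $1\le k\le n-1$, $E(x_k)\cap E(x_{k+1})=\varnothing$. Let $\Lambda_k=\operatorname{diag}(\mu^{(k)}_1,\ldots,\mu^{(k)}_k)$. For generic $x$ and $1\le m\le n-1$, let $g_m\in\mathrm{GL}(m)$ be the unique matrix with $x_m=g_m\Lambda_mg_m^{-1}$ whose last row consists of ones; the dual coordinates $b_m\in\mathbb{C}^m$ (and $c_m\in\mathbb{C}^m$, $\delta_{m+1}\in\mathbb{C}$) of $x$ are defined by $\begin{pmatrix} g_m^{-1}&0\\0&1\end{pmatrix}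 x_{m+1}\begin{pmatrix} g_m&0\\0&1\end{pmatrix}=\begin{pmatrix}\Lambda_m & c_m\\ b_m^{T} & \delta_{m+1}\end{pmatrix}$. $\operatorname{diag}(v)$ is the diagonal matrix with diagonal $v$; $P(\Lambda_m)$ is the diagonal matrix with entries $P(\mu^{(m)}_i)$. $\Pi_m$ is the $m\times m$ diagonal matrix with entries \[ (\Pi_m)_{jj}=1-\sum_{i=1}^{m-1}\frac{\prod_{k=1}^{m}(\mu^{(m-1)}_i-\mu^{(m)}_k)}{(\mu^{(m)}_j-\mu^{(m-1)}_i)^2\prod_{k\ne i,\,1\le k\le m-1}(\mu^{(m-1)}_i-\mu^{(m-1)}_k)},\qquad 1\le j\le m \] (so $\Pi_1=(1)$); it is the diagonal matrix relating row and column eigenvectors of the arrow matrix $\begin{pmatrix}\Lambda_{m-1}&c_{m-1}\\ b_{m-1}^T&\delta_m\end{pmatrix}$, equivalently the diagonal matrix for which the last row of $(g_m^{-1})^{T}\Pi_m$ consists of ones. *)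

theory Defs
  imports "Jordan_Normal_Form.Matrix" "Jordan_Normal_Form.Char_Poly"
begin

(* Conventions: matrices are Jordan_Normal_Form matrices ('a mat) with 0-based
   indices.  The paper's eigenvalue mu^{(k)}_i (1 <= i <= k) is  mu k (i-1). *)

definition mat_inv :: "complex mat \<Rightarrow> complex mat" where
  "mat_inv A = (THE B. B \<in> carrier_mat (dim_row A) (dim_row A)
                      \<and> inverts_mat A B \<and> inverts_mat B A)"

definition lead :: "complex mat \<Rightarrow> nat \<Rightarrow> complex mat" where
  "lead x k = mat k k (\<lambda>(i,j). x $$ (i,j))"

definition Pk :: "complex mat \<Rightarrow> nat \<Rightarrow> complex poly" where
  "Pk x k = char_poly (lead x k)"

definition eigs :: "complex mat \<Rightarrow> nat \<Rightarrow> complex set" where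
  "eigs x k = {l. eigenvalue (lead x k) l}"

definition generic :: "nat \<Rightarrow> complex mat \<Rightarrow> bool" where
  "generic n x \<longleftrightarrow> x \<in> carrier_mat n n
     \<and> (\<forall>k\<in>{1..n}. card (eigs x k) = k)
     \<and> (\<forall>k\<in>{1..n-1}. eigs x k \<inter> eigs x (Suc k) = {})"

definition eig_ordering :: "nat \<Rightarrow> complex mat \<Rightarrow> (nat \<Rightarrow> nat \<Rightarrow> complex) \<Rightarrow> bool" where
  "eig_ordering n x mu \<longleftrightarrow> (\<forall>k\<in>{1..n}. bij_betw (mu k) {..<k} (eigs x k))"

definition Lam :: "(nat \<Rightarrow> nat \<Rightarrow> complex) \<Rightarrow> nat \<Rightarrow> complex mat" where
  "Lam mu k = mat_diag k (mu k)"

definition dual_g :: "complex mat \<Rightarrow> (nat \<Rightarrow> nat \<Rightarrow> complex) \<Rightarrow> nat \<Rightarrow> complex mat" where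
  "dual_g x mu m = (THE g. g \<in> carrier_mat m m \<and> invertible_mat g
      \<and> lead x m = g * Lam mu m * mat_inv g
      \<and> (\<forall>j<m. g $$ (m - 1, j) = 1))"

text \<open>The conjugated matrix diag(g_m^{-1},1) x_{m+1} diag(g_m,1)
  = [[Lambda_m, c_m], [b_m^T, delta_{m+1}]].\<close>
definition dual_block :: "complex mat \<Rightarrow> (nat \<Rightarrow> nat \<Rightarrow> complex) \<Rightarrow> nat \<Rightarrow> complex mat" where
  "dual_block x mu m =
     (let g = dual_g x mu m in
      four_block_mat (mat_inv g) (0\<^sub>m m 1) (0\<^sub>m 1 m) (1\<^sub>m 1)
        * lead x (Suc m)
        * four_block_mat g (0\<^sub>m m 1) (0\<^sub>m 1 m) (1\<^sub>m 1))"

text \<open>Dual coordinates b_m (entry j is the paper's (b_m)_{j+1}).\<close>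
definition dual_b :: "complex mat \<Rightarrow> (nat \<Rightarrow> nat \<Rightarrow> complex) \<Rightarrow> nat \<Rightarrow> nat \<Rightarrow> complex" where
  "dual_b x mu m j = dual_block x mu m $$ (m, j)"

definition Pi_mat :: "(nat \<Rightarrow> nat \<Rightarrow> complex) \<Rightarrow> nat \<Rightarrow> complex mat" where
  "Pi_mat mu m = mat_diag m (\<lambda>j. 1 - (\<Sum>i<m-1.
      (\<Prod>k<m. mu (m-1) i - mu m k) /
      ((mu m j - mu (m-1) i)^2 * (\<Prod>k\<in>{..<m-1} - {i}. mu (m-1) i - mu (m-1) k))))"

definition poly_Lam :: "complex poly \<Rightarrow> (nat \<Rightarrow> nat \<Rightarrow> complex) \<Rightarrow> nat \<Rightarrow> complex mat" where
  "poly_Lam p mu m = mat_diag m (\<lambda>j. poly p (mu m j))"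

definition Sigma_mat :: "complex mat \<Rightarrow> (nat \<Rightarrow> nat \<Rightarrow> complex) \<Rightarrow> nat \<Rightarrow> complex mat" where
  "Sigma_mat x mu m = - (poly_Lam (Pk x (Suc m)) mu m * mat_inv (poly_Lam (pderiv (Pk x m)) mu m))"

end

theory Submission
  imports Defs
begin

text \<open>Conjugating x_{m+1} by diag(g_m, 1) gives the arrow matrix [[Lambda_m, c_m], [b_m^T, delta]].
  Expanding its characteristic polynomial P_{m+1} at mu^{(m)}_j gives
  (b_m)_j (c_m)_j P_m'(mu^{(m)}_j) = - P_{m+1}(mu^{(m)}_j), i.e. diag(b_m) diag(c_m) = Sigma_m.
  Writing nu = mu^{(m)} and lambda = mu^{(m+1)}, the right and left eigenvectors of the arrow matrix
  with last entry 1 are (c_i / (lambda_j - nu_i))_i and (b_i / (lambda_j - nu_i))_i; their pairing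
  1 + sum_i b_i c_i / (lambda_j - nu_i)^2 equals P_{m+1}'(lambda_j) / P_m(lambda_j), which is nonzero,
  so g_{m+1} = diag(g_m, 1) V exists. For the matrix h_m built in the same way from x^T, h_m^T x_m =
  Lambda_m h_m^T, hence h_m^T g_m commutes with Lambda_m and is a diagonal matrix D. Comparing last
  rows gives b~_m = D c_m, and D is the pairing of the eigenvectors of the arrow matrix of level m-1,
  which is Pi_m.\<close>

lemma det_diagonal_entries:
  fixes M :: "'a::comm_ring_1 mat"
  assumes M: "M \<in> carrier_mat p p"
    and off: "\<And>i k. i < p \<Longrightarrow> k < p \<Longrightarrow> i \<noteq> k \<Longrightarrow> M $$ (i,k) = 0"
  shows "det M = (\<Prod>k<p. M $$ (k,k))"
proof -
  have "upper_triangular M" using M off unfolding upper_triangular_def by auto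
  from det_upper_triangular[OF this M] M show ?thesis
    by (simp add: prod_list_diag_prod atLeast0LessThan)
qed

lemma bij_betw_insert_index:
  assumes j: "j < Suc q"
  shows "bij_betw (insert_index j) {..<q} ({..<Suc q} - {j})"
proof (rule bij_betw_imageI)
  show "inj_on (insert_index j) {..<q}"
    by (auto simp: inj_on_def insert_index_def split: if_splits)
  show "insert_index j ` {..<q} = {..<Suc q} - {j}"
  proof
    show "insert_index j ` {..<q} \<subseteq> {..<Suc q} - {j}"
      by (auto simp: insert_index_def split: if_splits)
  next
    show "{..<Suc q} - {j} \<subseteq> insert_index j ` {..<q}"
    proof
      fix y assume y: "y \<in> {..<Suc q} - {j}"
      show "y \<in> insert_index j ` {..<q}"
      proof (cases "y < j")
        case True
        with y j show ?thesis by (intro image_eqI[of _ _ y]) (auto simp: insert_index_def)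
      next
        case False
        with y show ?thesis by (intro image_eqI[of _ _ "y - 1"]) (auto simp: insert_index_def)
      qed
    qed
  qed
qed

text \<open>Deleting column j < p of an arrow matrix leaves a matrix whose row j has a single nonzero entry.\<close>
lemma cofactor_arrow_last_row:
  fixes E :: "'a::comm_ring_1 mat"
  assumes E: "E \<in> carrier_mat (Suc p) (Suc p)"
    and off: "\<And>i k. i < p \<Longrightarrow> k < p \<Longrightarrow> i \<noteq> k \<Longrightarrow> E $$ (i,k) = 0"
    and j: "j < p"
  shows "cofactor E p j = - (E $$ (j,p) * (\<Prod>k\<in>{..<p}-{j}. E $$ (k,k)))"
proof -
  define M where "M = mat_delete E p j"
  obtain q where q: "p = Suc q" using j by (cases p) auto
  have M: "M \<in> carrier_mat p p" unfolding M_def using E by (auto simp: mat_delete_def)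
  have Mij: "M $$ (a,b) = E $$ (a, insert_index j b)" if "a < p" "b < p" for a b
    using that E unfolding M_def by (auto simp: mat_delete_def insert_index_def)
  have row_j: "M $$ (j,l) = 0" if "l < q" for l
    using that j q by (simp add: Mij off insert_index_def)
  have "det M = (\<Sum>l<p. M $$ (j,l) * cofactor M j l)"
    by (rule laplace_expansion_row[OF M j])
  also have "\<dots> = M $$ (j,q) * cofactor M j q"
    unfolding q by (simp add: row_j)
  also have "M $$ (j,q) = E $$ (j,p)"
    using j q by (subst Mij) (auto simp: insert_index_def)
  also have "cofactor M j q = (-1)^(j+q) * (\<Prod>k\<in>{..<p}-{j}. E $$ (k,k))"
  proof -
    have "det (mat_delete M j q) = (\<Prod>a<q. mat_delete M j q $$ (a,a))"
      by (rule det_diagonal_entries)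
        (use M q j in \<open>auto simp: mat_delete_def Mij insert_index_def intro!: off\<close>)
    also have "\<dots> = (\<Prod>a<q. E $$ (insert_index j a, insert_index j a))"
      by (rule prod.cong) (use M q j in \<open>auto simp: mat_delete_def Mij insert_index_def\<close>)
    also have "\<dots> = (\<Prod>k\<in>{..<p}-{j}. E $$ (k,k))"
      using prod.reindex_bij_betw[OF bij_betw_insert_index[of j q], of "\<lambda>k. E $$ (k,k)"] j q
      by simp
    finally show ?thesis unfolding cofactor_def by simp
  qed
  finally have dM: "det M = E $$ (j,p) * ((-1)^(j+q) * (\<Prod>k\<in>{..<p}-{j}. E $$ (k,k)))" .
  have sgn: "(-1::'a)^(p+j) * (-1)^(j+q) = -1"
  proof -
    have "(-1::'a)^(p+j) * (-1)^(j+q) = (-1)^(Suc (2*(j+q)))"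
      unfolding q by (simp add: power_add[symmetric] add_ac)
    also have "\<dots> = -1" by (simp only: power_Suc power_mult) simp
    finally show ?thesis .
  qed
  have "cofactor E p j = ((-1)^(p+j) * (-1)^(j+q)) * (E $$ (j,p) * (\<Prod>k\<in>{..<p}-{j}. E $$ (k,k)))"
    unfolding cofactor_def M_def[symmetric] dM by (simp only: mult_ac)
  then show ?thesis unfolding sgn by simp
qed

lemma det_arrow:
  fixes E :: "'a::comm_ring_1 mat"
  assumes E: "E \<in> carrier_mat (Suc p) (Suc p)"
    and off: "\<And>i k. i < p \<Longrightarrow> k < p \<Longrightarrow> i \<noteq> k \<Longrightarrow> E $$ (i,k) = 0"
  shows "det E = E $$ (p,p) * (\<Prod>k<p. E $$ (k,k))
           - (\<Sum>i<p. E $$ (p,i) * E $$ (i,p) * (\<Prod>k\<in>{..<p}-{i}. E $$ (k,k)))"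
proof -
  have last: "cofactor E p p = (\<Prod>k<p. E $$ (k,k))"
  proof -
    have "det (mat_delete E p p) = (\<Prod>k<p. mat_delete E p p $$ (k,k))"
      by (rule det_diagonal_entries) (use E off in \<open>auto simp: mat_delete_def\<close>)
    also have "\<dots> = (\<Prod>k<p. E $$ (k,k))"
      by (rule prod.cong) (use E in \<open>auto simp: mat_delete_def\<close>)
    finally show ?thesis unfolding cofactor_def by simp
  qed
  have "det E = (\<Sum>j<Suc p. E $$ (p,j) * cofactor E p j)"
    by (rule laplace_expansion_row[OF E]) simp
  also have "\<dots> = (\<Sum>j<p. E $$ (p,j) * cofactor E p j) + E $$ (p,p) * cofactor E p p"
    by simp
  also have "(\<Sum>j<p. E $$ (p,j) * cofactor E p j)
      = - (\<Sum>i<p. E $$ (p,i) * E $$ (i,p) * (\<Prod>k\<in>{..<p}-{i}. E $$ (k,k)))"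
    by (simp add: cofactor_arrow_last_row[OF E off] sum_negf[symmetric] algebra_simps)
  finally show ?thesis unfolding last by (simp add: algebra_simps)
qed

lemma poly_char_poly_arrow:
  fixes B :: "'a::field mat"
  assumes B: "B \<in> carrier_mat (Suc k) (Suc k)"
    and diag: "\<And>i j. i < k \<Longrightarrow> j < k \<Longrightarrow> B $$ (i,j) = (if i = j then nu i else 0)"
  shows "poly (char_poly B) l = (l - B $$ (k,k)) * (\<Prod>i<k. l - nu i)
     - (\<Sum>i<k. B $$ (k,i) * B $$ (i,k) * (\<Prod>j\<in>{..<k}-{i}. l - nu j))"
proof -
  let ?E = "- char_matrix B l"
  have E: "?E \<in> carrier_mat (Suc k) (Suc k)" using B by simp
  have Eij: "?E $$ (i,j) = (if i = j then l else 0) - B $$ (i,j)" if "i < Suc k" "j < Suc k" for i j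
    using B that by (simp add: char_matrix_def)
  have "poly (char_poly B) l = det ?E" by (rule char_poly_matrix[OF B])
  also have "\<dots> = ?E $$ (k,k) * (\<Prod>i<k. ?E $$ (i,i))
      - (\<Sum>i<k. ?E $$ (k,i) * ?E $$ (i,k) * (\<Prod>j\<in>{..<k}-{i}. ?E $$ (j,j)))"
    by (rule det_arrow[OF E]) (simp add: Eij diag)
  also have "\<dots> = (l - B $$ (k,k)) * (\<Prod>i<k. l - nu i)
     - (\<Sum>i<k. B $$ (k,i) * B $$ (i,k) * (\<Prod>j\<in>{..<k}-{i}. l - nu j))"
    by (simp add: Eij diag)
  finally show ?thesis .
qed

lemma poly_char_poly_arrow_diag_entry:
  fixes B :: "'a::field mat"
  assumes B: "B \<in> carrier_mat (Suc k) (Suc k)"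
    and diag: "\<And>i j. i < k \<Longrightarrow> j < k \<Longrightarrow> B $$ (i,j) = (if i = j then nu i else 0)"
    and j: "j < k"
  shows "B $$ (k,j) * B $$ (j,k) * (\<Prod>l\<in>{..<k}-{j}. nu j - nu l) = - poly (char_poly B) (nu j)"
proof -
  have "(\<Sum>i<k. B $$ (k,i) * B $$ (i,k) * (\<Prod>l\<in>{..<k}-{i}. nu j - nu l))
      = B $$ (k,j) * B $$ (j,k) * (\<Prod>l\<in>{..<k}-{j}. nu j - nu l)"
    by (subst sum.remove[of _ j]) (use j in \<open>auto intro!: sum.neutral simp: prod_zero_iff\<close>)
  moreover have "(\<Prod>i<k. nu j - nu i) = 0" using j by (auto simp: prod_zero_iff)
  ultimately show ?thesis by (simp add: poly_char_poly_arrow[OF B diag])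
qed

lemma index_mult_mat_sum:
  "A \<in> carrier_mat a b \<Longrightarrow> B \<in> carrier_mat b c \<Longrightarrow> i < a \<Longrightarrow> j < c \<Longrightarrow>
    (A * B) $$ (i,j) = (\<Sum>l<b. A $$ (i,l) * B $$ (l,j))"
  by (simp add: scalar_prod_def atLeast0LessThan)

lemma mat_inv_right_inverse:
  assumes A: "A \<in> carrier_mat m m" and B: "B \<in> carrier_mat m m" and AB: "A * B = 1\<^sub>m m"
  shows "invertible_mat A" "mat_inv A = B" "B * A = 1\<^sub>m m"
proof -
  show BA: "B * A = 1\<^sub>m m" by (rule mat_mult_left_right_inverse[OF A B AB])
  show "invertible_mat A"
    unfolding invertible_mat_def inverts_mat_def square_mat.simps using A B AB BA by auto
  show "mat_inv A = B" unfolding mat_inv_def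
  proof (rule the_equality)
    show "B \<in> carrier_mat (dim_row A) (dim_row A) \<and> inverts_mat A B \<and> inverts_mat B A"
      using A B AB BA unfolding inverts_mat_def by auto
  next
    fix C assume "C \<in> carrier_mat (dim_row A) (dim_row A) \<and> inverts_mat A C \<and> inverts_mat C A"
    then have C: "C \<in> carrier_mat m m" and CA: "C * A = 1\<^sub>m m"
      using A unfolding inverts_mat_def by auto
    have "C = C * (A * B)" using C AB by simp
    also have "\<dots> = (C * A) * B" using A B C by (simp add: assoc_mult_mat)
    also have "\<dots> = B" using CA B by simp
    finally show "C = B" .
  qed
qed

lemma invertible_mat_inv:
  assumes A: "A \<in> carrier_mat m m" and inv: "invertible_mat A"
  shows "mat_inv A \<in> carrier_mat m m" "A * mat_inv A = 1\<^sub>m m" "mat_inv A * A = 1\<^sub>m m"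
proof -
  obtain B where AB: "A * B = 1\<^sub>m m" and BA: "B * A = 1\<^sub>m (dim_row B)"
    using inv A unfolding invertible_mat_def inverts_mat_def by auto
  have "dim_col B = m" using arg_cong[OF AB, of dim_col] by simp
  moreover have "dim_row B = m" using arg_cong[OF BA, of dim_col] A by simp
  ultimately have B: "B \<in> carrier_mat m m" by auto
  from mat_inv_right_inverse[OF A B AB] B AB
  show "mat_inv A \<in> carrier_mat m m" "A * mat_inv A = 1\<^sub>m m" "mat_inv A * A = 1\<^sub>m m"
    by auto
qed

lemma mat_inv_mat_diag:
  assumes nz: "\<And>j. j < m \<Longrightarrow> f j \<noteq> 0"
  shows "mat_inv (mat_diag m f) = mat_diag m (\<lambda>j. inverse (f j))"
proof -
  have "mat_diag m f * mat_diag m (\<lambda>j. inverse (f j)) = mat_diag m (\<lambda>j. 1)"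
    unfolding mat_diag_diag using nz by (intro eq_matI) (auto simp: mat_diag_def)
  then show ?thesis using mat_inv_right_inverse(2)[OF mat_diag_dim mat_diag_dim] by simp
qed

lemma mult_mat_inv_cancel_left:
  assumes A: "A \<in> carrier_mat m m" and "invertible_mat A" and X: "X \<in> carrier_mat m c"
  shows "A * (mat_inv A * X) = X" "mat_inv A * (A * X) = X"
proof -
  note Ai = invertible_mat_inv[OF assms(1,2)]
  have "A * (mat_inv A * X) = (A * mat_inv A) * X" by (rule assoc_mult_mat[symmetric, OF A Ai(1) X])
  then show "A * (mat_inv A * X) = X" using Ai X by simp
  have "mat_inv A * (A * X) = (mat_inv A * A) * X" by (rule assoc_mult_mat[symmetric, OF Ai(1) A X])
  then show "mat_inv A * (A * X) = X" using Ai X by simp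
qed

lemma intertwiner_commute:
  fixes A D X Y :: "'a::semiring_1 mat"
  assumes A: "A \<in> carrier_mat m m" and D: "D \<in> carrier_mat m m"
    and X: "X \<in> carrier_mat m m" and Y: "Y \<in> carrier_mat m m"
    and YA: "Y * A = D * Y" and AX: "A * X = X * D"
  shows "D * (Y * X) = (Y * X) * D"
proof -
  have "D * (Y * X) = (Y * A) * X" unfolding YA by (rule assoc_mult_mat[symmetric, OF D Y X])
  also have "\<dots> = Y * (X * D)" unfolding AX[symmetric] by (rule assoc_mult_mat[OF Y A X])
  also have "\<dots> = (Y * X) * D" by (rule assoc_mult_mat[symmetric, OF Y X D])
  finally show ?thesis .
qed

lemma commute_mat_diag_imp_diag:
  fixes M :: "'a::idom mat"
  assumes M: "M \<in> carrier_mat m m" and comm: "mat_diag m f * M = M * mat_diag m f"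
    and inj: "inj_on f {..<m}"
  shows "M = mat_diag m (\<lambda>j. M $$ (j,j))"
proof (rule eq_matI)
  fix i j assume "i < dim_row (mat_diag m (\<lambda>j. M $$ (j,j)))" "j < dim_col (mat_diag m (\<lambda>j. M $$ (j,j)))"
  then have i: "i < m" and j: "j < m" by (auto simp: mat_diag_def)
  have "f i * M $$ (i,j) = M $$ (i,j) * f j"
    using arg_cong[OF comm, of "\<lambda>A. A $$ (i,j)"] mat_diag_mult_left[OF M] mat_diag_mult_right[OF M] i j
    by simp
  then have "i \<noteq> j \<Longrightarrow> M $$ (i,j) = 0" using inj i j by (auto simp: inj_on_def algebra_simps)
  then show "M $$ (i,j) = mat_diag m (\<lambda>j. M $$ (j,j)) $$ (i,j)" using i j by (auto simp: mat_diag_def)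
qed (use M in \<open>auto simp: mat_diag_def\<close>)

lemma diagonalize_by_right_inverse:
  assumes A: "A \<in> carrier_mat m m" and G: "G \<in> carrier_mat m m" and H: "H \<in> carrier_mat m m"
    and D: "D \<in> carrier_mat m m" and AG: "A * G = G * D" and GH: "G * H = 1\<^sub>m m"
  shows "invertible_mat G" "A = G * D * mat_inv G"
proof -
  note inv = mat_inv_right_inverse[OF G H GH]
  show "invertible_mat G" by (rule inv(1))
  have "A = A * (G * H)" using A GH by simp
  also have "\<dots> = (A * G) * H" by (rule assoc_mult_mat[symmetric, OF A G H])
  finally show "A = G * D * mat_inv G" unfolding AG inv(2) .
qed

definition diag_one :: "nat \<Rightarrow> 'a::{zero,one} mat \<Rightarrow> 'a mat" where
  "diag_one m P = four_block_mat P (0\<^sub>m m 1) (0\<^sub>m 1 m) (1\<^sub>m 1)"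

lemma diag_one_carrier [simp]: "P \<in> carrier_mat m m \<Longrightarrow> diag_one m P \<in> carrier_mat (Suc m) (Suc m)"
  unfolding diag_one_def using four_block_carrier_mat[of P m m "1\<^sub>m 1" 1 1] by simp

lemma diag_one_last_row:
  "P \<in> carrier_mat m m \<Longrightarrow> j < Suc m \<Longrightarrow> diag_one m P $$ (m,j) = (if j = m then 1 else 0)"
  unfolding diag_one_def by auto

lemma diag_one_last_col:
  "P \<in> carrier_mat m m \<Longrightarrow> i < Suc m \<Longrightarrow> diag_one m P $$ (i,m) = (if i = m then 1 else 0)"
  unfolding diag_one_def by auto

lemma diag_one_mult:
  fixes P Q :: "'a::semiring_1 mat"
  assumes P: "P \<in> carrier_mat m m" and Q: "Q \<in> carrier_mat m m"
  shows "diag_one m P * diag_one m Q = diag_one m (P * Q)"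
  unfolding diag_one_def
  by (subst mult_four_block_mat[OF P zero_carrier_mat zero_carrier_mat one_carrier_mat
        Q zero_carrier_mat zero_carrier_mat one_carrier_mat]) (use P Q in auto)

lemma diag_one_one [simp]: "diag_one m (1\<^sub>m m) = 1\<^sub>m (Suc m)"
  unfolding diag_one_def using four_block_one_mat[of m 1] by simp

lemma diag_one_inverse:
  assumes P: "P \<in> carrier_mat m m" and inv: "invertible_mat P"
  shows "diag_one m P * diag_one m (mat_inv P) = 1\<^sub>m (Suc m)"
    "diag_one m (mat_inv P) * diag_one m P = 1\<^sub>m (Suc m)"
proof -
  note Pi = invertible_mat_inv[OF P inv]
  show "diag_one m P * diag_one m (mat_inv P) = 1\<^sub>m (Suc m)"
    using diag_one_mult[OF P Pi(1)] Pi(2) by simp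
  show "diag_one m (mat_inv P) * diag_one m P = 1\<^sub>m (Suc m)"
    using diag_one_mult[OF Pi(1) P] Pi(3) by simp
qed

lemma diag_one_conj_four_block:
  fixes P Q A :: "'a::semiring_1 mat"
  assumes P: "P \<in> carrier_mat k k" and Q: "Q \<in> carrier_mat k k" and A: "A \<in> carrier_mat k k"
    and c: "c \<in> carrier_mat k 1" and r: "r \<in> carrier_mat 1 k" and d: "d \<in> carrier_mat 1 1"
  shows "diag_one k P * four_block_mat A c r d * diag_one k Q = four_block_mat (P * A * Q) (P * c) (r * Q) d"
proof -
  have "diag_one k P * four_block_mat A c r d = four_block_mat (P * A) (P * c) r d"
    unfolding diag_one_def
    by (subst mult_four_block_mat[OF P zero_carrier_mat zero_carrier_mat one_carrier_mat A c r d])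
      (use P A c r d in simp)
  also have "\<dots> * diag_one k Q = four_block_mat (P * A * Q) (P * c) (r * Q) d"
    unfolding diag_one_def by (subst mult_four_block_mat) (use P A c r d Q in auto)
  finally show ?thesis .
qed

lemma poly_pderiv_at_root_of_factor:
  fixes P Q :: "complex poly"
  assumes S: "finite S" and eq: "\<And>l. l \<notin> S \<Longrightarrow> poly P l = poly Q l * f l"
    and y: "y \<notin> S" and f': "(f has_field_derivative f') (at y)" and fy: "f y = 0"
  shows "poly (pderiv P) y = poly Q y * f'"
proof -
  have "((\<lambda>l. poly Q l * f l) has_field_derivative poly (pderiv Q) y * f y + f' * poly Q y) (at y)"
    by (rule DERIV_mult[OF poly_DERIV f'])
  then have "(poly P has_field_derivative poly (pderiv Q) y * f y + f' * poly Q y) (at y)"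
    by (rule has_field_derivative_transform_within_open[where S = "- S"])
      (use S y eq in \<open>auto simp: finite_imp_closed open_Compl\<close>)
  from DERIV_unique[OF poly_DERIV this] show ?thesis by (simp add: fy)
qed

section \<open>Arrow matrices with known spectrum\<close>

locale arrow_matrix =
  fixes k :: nat and B :: "complex mat" and nu lam :: "nat \<Rightarrow> complex"
  assumes carrier: "B \<in> carrier_mat (Suc k) (Suc k)"
    and diag: "\<And>i j. i < k \<Longrightarrow> j < k \<Longrightarrow> B $$ (i,j) = (if i = j then nu i else 0)"
    and root: "\<And>j. j < Suc k \<Longrightarrow> poly (char_poly B) (lam j) = 0"
    and simple_root: "\<And>j. j < Suc k \<Longrightarrow> poly (pderiv (char_poly B)) (lam j) \<noteq> 0"
    and separated: "\<And>i j. i < k \<Longrightarrow> j < Suc k \<Longrightarrow> lam j \<noteq> nu i"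
    and lam_inj: "inj_on lam {..<Suc k}"
begin

text \<open>Column j of right_eigvecs and row j of left_eigvecs are the right and left eigenvectors for
  lam j, normalized to have last entry 1.\<close>
definition right_eigvecs :: "complex mat" where
  "right_eigvecs = mat (Suc k) (Suc k) (\<lambda>(i,j). if i < k then B $$ (i,k) / (lam j - nu i) else 1)"

definition left_eigvecs :: "complex mat" where
  "left_eigvecs = mat (Suc k) (Suc k) (\<lambda>(j,i). if i < k then B $$ (k,i) / (lam j - nu i) else 1)"

definition pairing :: "nat \<Rightarrow> complex" where
  "pairing j = 1 + (\<Sum>i<k. B $$ (k,i) * B $$ (i,k) / (lam j - nu i)^2)"

lemma right_eigvecs_carrier [simp]: "right_eigvecs \<in> carrier_mat (Suc k) (Suc k)"
  and left_eigvecs_carrier [simp]: "left_eigvecs \<in> carrier_mat (Suc k) (Suc k)"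
  unfolding right_eigvecs_def left_eigvecs_def by auto

lemma poly_char_poly_secular:
  assumes l: "l \<notin> nu ` {..<k}"
  shows "poly (char_poly B) l
    = (\<Prod>i<k. l - nu i) * (l - B $$ (k,k) - (\<Sum>i<k. B $$ (k,i) * B $$ (i,k) / (l - nu i)))"
proof -
  have remove: "(\<Prod>j\<in>{..<k}-{i}. l - nu j) = (\<Prod>i<k. l - nu i) / (l - nu i)" if i: "i < k" for i
  proof -
    have "(\<Prod>i<k. l - nu i) = (l - nu i) * (\<Prod>j\<in>{..<k}-{i}. l - nu j)"
      by (rule prod.remove) (use i in auto)
    moreover have "l - nu i \<noteq> 0" using l i by auto
    ultimately show ?thesis by simp
  qed
  have "(\<Sum>i<k. B $$ (k,i) * B $$ (i,k) * (\<Prod>j\<in>{..<k}-{i}. l - nu j))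
      = (\<Prod>i<k. l - nu i) * (\<Sum>i<k. B $$ (k,i) * B $$ (i,k) / (l - nu i))"
    by (simp add: remove sum_distrib_left mult_ac)
  with poly_char_poly_arrow[OF carrier diag, of l] show ?thesis by (simp add: algebra_simps)
qed

lemma lam_notin_nu: "j < Suc k \<Longrightarrow> lam j \<notin> nu ` {..<k}"
  using separated by auto

lemma secular_equation:
  assumes j: "j < Suc k"
  shows "(\<Sum>i<k. B $$ (k,i) * B $$ (i,k) / (lam j - nu i)) + B $$ (k,k) = lam j"
proof -
  have "(\<Prod>i<k. lam j - nu i) \<noteq> 0" using separated j by auto
  moreover have "(\<Prod>i<k. lam j - nu i)
      * (lam j - B $$ (k,k) - (\<Sum>i<k. B $$ (k,i) * B $$ (i,k) / (lam j - nu i))) = 0"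
    using poly_char_poly_secular[OF lam_notin_nu[OF j]] root[OF j] by simp
  ultimately have "lam j - B $$ (k,k) - (\<Sum>i<k. B $$ (k,i) * B $$ (i,k) / (lam j - nu i)) = 0"
    by simp
  then show ?thesis by (metis add.commute diff_diff_eq eq_iff_diff_eq_0)
qed

lemma right_eigvecs_eigen: "B * right_eigvecs = right_eigvecs * mat_diag (Suc k) lam"
proof (rule eq_matI)
  let ?V = right_eigvecs
  fix i j assume "i < dim_row (?V * mat_diag (Suc k) lam)" "j < dim_col (?V * mat_diag (Suc k) lam)"
  then have i: "i < Suc k" and j: "j < Suc k" by (auto simp: right_eigvecs_def mat_diag_def)
  have V: "?V $$ (l,j) = (if l < k then B $$ (l,k) / (lam j - nu l) else 1)" if "l < Suc k" for l
    using that j unfolding right_eigvecs_def by simp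
  have "(B * ?V) $$ (i,j) = (\<Sum>l<Suc k. B $$ (i,l) * ?V $$ (l,j))"
    by (rule index_mult_mat_sum[OF carrier right_eigvecs_carrier i j])
  also have "\<dots> = (\<Sum>l<k. B $$ (i,l) * ?V $$ (l,j)) + B $$ (i,k) * ?V $$ (k,j)" by simp
  also have "\<dots> = ?V $$ (i,j) * lam j"
  proof (cases "i < k")
    case True
    have "(\<Sum>l<k. B $$ (i,l) * ?V $$ (l,j)) = nu i * ?V $$ (i,j)"
      by (subst sum.remove[of _ i]) (use True in \<open>auto intro!: sum.neutral simp: diag\<close>)
    then show ?thesis
      using True j separated[OF True j] by (simp add: V field_simps)
  next
    case False
    then have "i = k" using i by auto
    then show ?thesis using secular_equation[OF j] by (simp add: V)
  qed
  also have "\<dots> = (?V * mat_diag (Suc k) lam) $$ (i,j)"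
    using mat_diag_mult_right[OF right_eigvecs_carrier] i j by simp
  finally show "(B * ?V) $$ (i,j) = (?V * mat_diag (Suc k) lam) $$ (i,j)" .
qed (use carrier in \<open>auto simp: right_eigvecs_def mat_diag_def\<close>)

lemma arrow_matrix_transpose: "arrow_matrix k (transpose_mat B) nu lam"
  using diag root simple_root separated lam_inj carrier
  by unfold_locales (auto simp: char_poly_transpose_mat[OF carrier])

lemma left_eigvecs_eigen: "left_eigvecs * B = mat_diag (Suc k) lam * left_eigvecs"
proof -
  interpret T: arrow_matrix k "transpose_mat B" nu lam by (rule arrow_matrix_transpose)
  have U: "left_eigvecs = transpose_mat T.right_eigvecs"
    by (rule eq_matI) (use carrier in \<open>auto simp: left_eigvecs_def T.right_eigvecs_def\<close>)
  have "transpose_mat (transpose_mat B * T.right_eigvecs)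
      = transpose_mat (T.right_eigvecs * mat_diag (Suc k) lam)"
    by (simp only: T.right_eigvecs_eigen)
  moreover have "transpose_mat (mat_diag (Suc k) lam) = mat_diag (Suc k) lam"
    by (rule eq_matI) (auto simp: mat_diag_def)
  ultimately show ?thesis
    unfolding U
    transpose_mult[OF transpose_carrier_mat[THEN iffD2, OF carrier] T.right_eigvecs_carrier]
    transpose_mult[OF T.right_eigvecs_carrier mat_diag_dim]
    by simp
qed

lemma left_eigvecs_unique:
  assumes Y: "Y \<in> carrier_mat (Suc k) (Suc k)" and YB: "Y * B = mat_diag (Suc k) lam * Y"
    and last: "\<And>j. j < Suc k \<Longrightarrow> Y $$ (j,k) = 1"
  shows "Y = left_eigvecs"
proof (rule eq_matI)
  fix j i assume "j < dim_row left_eigvecs" "i < dim_col left_eigvecs"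
  then have j: "j < Suc k" and i: "i < Suc k" by (auto simp: left_eigvecs_def)
  show "Y $$ (j,i) = left_eigvecs $$ (j,i)"
  proof (cases "i < k")
    case True
    have "(Y * B) $$ (j,i) = (\<Sum>l<Suc k. Y $$ (j,l) * B $$ (l,i))"
      by (rule index_mult_mat_sum[OF Y carrier j i])
    also have "\<dots> = (\<Sum>l<k. Y $$ (j,l) * B $$ (l,i)) + B $$ (k,i)"
      using last[OF j] by simp
    also have "(\<Sum>l<k. Y $$ (j,l) * B $$ (l,i)) = Y $$ (j,i) * nu i"
      by (subst sum.remove[of _ i]) (use True in \<open>auto intro!: sum.neutral simp: diag\<close>)
    finally have "(Y * B) $$ (j,i) = Y $$ (j,i) * nu i + B $$ (k,i)" .
    moreover have "(Y * B) $$ (j,i) = lam j * Y $$ (j,i)"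
      using mat_diag_mult_left[OF Y] YB i j by simp
    ultimately have "Y $$ (j,i) * (lam j - nu i) = B $$ (k,i)" by (simp add: algebra_simps)
    then show ?thesis
      using True i j separated[OF True j] by (simp add: left_eigvecs_def field_simps)
  next
    case False
    then have "i = k" using i by simp
    then show ?thesis using j last by (simp add: left_eigvecs_def)
  qed
qed (use Y in \<open>auto simp: left_eigvecs_def\<close>)

lemma left_right_eigvecs: "left_eigvecs * right_eigvecs = mat_diag (Suc k) pairing"
proof -
  let ?N = "left_eigvecs * right_eigvecs"
  have N: "?N \<in> carrier_mat (Suc k) (Suc k)"
    by (rule mult_carrier_mat[OF left_eigvecs_carrier right_eigvecs_carrier])
  have "?N = mat_diag (Suc k) (\<lambda>j. ?N $$ (j,j))"
    by (rule commute_mat_diag_imp_diag[OF N intertwiner_commute[OF carrier _ _ _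
          left_eigvecs_eigen right_eigvecs_eigen] lam_inj]) auto
  also have "(\<lambda>j. ?N $$ (j,j)) j = pairing j" if j: "j < Suc k" for j
  proof -
    have "?N $$ (j,j) = (\<Sum>l<Suc k. left_eigvecs $$ (j,l) * right_eigvecs $$ (l,j))"
      by (rule index_mult_mat_sum[OF _ _ j j]) auto
    also have "\<dots> = (\<Sum>l<k. B $$ (k,l) * B $$ (l,k) / (lam j - nu l)^2) + 1"
      using j by (simp add: left_eigvecs_def right_eigvecs_def power2_eq_square)
    finally show ?thesis unfolding pairing_def by simp
  qed
  then have "mat_diag (Suc k) (\<lambda>j. ?N $$ (j,j)) = mat_diag (Suc k) pairing"
    by (intro eq_matI) (auto simp: mat_diag_def)
  finally show ?thesis .
qed

text \<open>The pairing of the j-th left and right eigenvectors is the derivative at lam j of the secular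
  function whose zeros are the roots of the characteristic polynomial.\<close>
lemma pderiv_char_poly_pairing:
  assumes j: "j < Suc k"
  shows "poly (pderiv (char_poly B)) (lam j) = (\<Prod>i<k. lam j - nu i) * pairing j"
proof -
  let ?a = "\<lambda>i. B $$ (k,i) * B $$ (i,k)"
  let ?f = "\<lambda>l. l - B $$ (k,k) - (\<Sum>i<k. ?a i / (l - nu i))"
  have "(?f has_field_derivative pairing j) (at (lam j))"
    unfolding pairing_def
    by (rule derivative_eq_intros refl | use separated j in \<open>force\<close>)+
      (simp add: sum_negf power2_eq_square)
  from poly_pderiv_at_root_of_factor[where Q = "\<Prod>i<k. [:- nu i, 1:]", OF _ _ lam_notin_nu[OF j] this]
  show ?thesis
    using poly_char_poly_secular secular_equation[OF j] by (simp add: poly_prod algebra_simps)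
qed

lemma pairing_nonzero: "j < Suc k \<Longrightarrow> pairing j \<noteq> 0"
  using pderiv_char_poly_pairing simple_root by fastforce

lemma right_eigvecs_inverse:
  "right_eigvecs * (mat_diag (Suc k) (\<lambda>j. inverse (pairing j)) * left_eigvecs) = 1\<^sub>m (Suc k)"
proof -
  have "(mat_diag (Suc k) (\<lambda>j. inverse (pairing j)) * left_eigvecs) * right_eigvecs
      = mat_diag (Suc k) (\<lambda>j. inverse (pairing j)) * mat_diag (Suc k) pairing"
    by (simp add: assoc_mult_mat[OF mat_diag_dim left_eigvecs_carrier right_eigvecs_carrier]
        left_right_eigvecs)
  also have "\<dots> = 1\<^sub>m (Suc k)"
    unfolding mat_diag_diag mat_diag_one[symmetric] using pairing_nonzero
    by (intro eq_matI) (auto simp: mat_diag_def)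
  finally show ?thesis
    by (rule mat_mult_left_right_inverse[rotated 2])
      (auto intro: mult_carrier_mat[OF mat_diag_dim left_eigvecs_carrier])
qed

end

section \<open>Normalized eigenbases of leading principal submatrices\<close>

lemma lead_carrier [simp]: "lead x k \<in> carrier_mat k k"
  unfolding lead_def by simp

lemma lead_transpose:
  "x \<in> carrier_mat n n \<Longrightarrow> k \<le> n \<Longrightarrow> lead (transpose_mat x) k = transpose_mat (lead x k)"
  by (rule eq_matI) (auto simp: lead_def)

lemma lead_Suc_four_block:
  "lead x (Suc k) = four_block_mat (lead x k) (mat k 1 (\<lambda>(i,_). x $$ (i,k)))
     (mat 1 k (\<lambda>(_,j). x $$ (k,j))) (mat 1 1 (\<lambda>_. x $$ (k,k)))"
  by (rule eq_matI) (auto simp: lead_def less_Suc_eq)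

lemma eigs_Pk: "eigs x k = {l. poly (Pk x k) l = 0}"
  unfolding eigs_def Pk_def using eigenvalue_root_char_poly[OF lead_carrier] by auto

lemma Pk_transpose: "x \<in> carrier_mat n n \<Longrightarrow> k \<le> n \<Longrightarrow> Pk (transpose_mat x) k = Pk x k"
  unfolding Pk_def by (simp add: lead_transpose char_poly_transpose_mat[OF lead_carrier])

lemma eigs_transpose: "x \<in> carrier_mat n n \<Longrightarrow> k \<le> n \<Longrightarrow> eigs (transpose_mat x) k = eigs x k"
  unfolding eigs_Pk by (simp add: Pk_transpose)

lemma generic_transpose:
  assumes g: "generic n x" shows "generic n (transpose_mat x)"
proof -
  have xc: "x \<in> carrier_mat n n" using g unfolding generic_def by auto
  have "eigs (transpose_mat x) k \<inter> eigs (transpose_mat x) (Suc k) = {}" if k: "k \<in> {1..n-1}" for k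
  proof -
    have "k \<le> n" "Suc k \<le> n" using k by auto
    then show ?thesis
      using g k unfolding generic_def eigs_transpose[OF xc \<open>k \<le> n\<close>] eigs_transpose[OF xc \<open>Suc k \<le> n\<close>]
      by blast
  qed
  with g xc show ?thesis unfolding generic_def by (auto simp: eigs_transpose)
qed

lemma eig_ordering_transpose:
  "generic n x \<Longrightarrow> eig_ordering n x mu \<Longrightarrow> eig_ordering n (transpose_mat x) mu"
  unfolding eig_ordering_def generic_def by (auto simp: eigs_transpose)

lemma poly_pderiv_prod_linear:
  fixes c :: "nat \<Rightarrow> 'a::idom"
  assumes S: "finite S" and j: "j \<in> S"
  shows "poly (pderiv (\<Prod>i\<in>S. [:- c i, 1:])) (c j) = (\<Prod>i\<in>S-{j}. c j - c i)"
  unfolding prod.remove[OF S j] by (simp add: pderiv_mult poly_prod pderiv_pCons del: mult_pCons_left)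

lemma Lam_carrier [simp]: "Lam mu m \<in> carrier_mat m m"
  and Lam_dims [simp]: "dim_row (Lam mu m) = m" "dim_col (Lam mu m) = m"
  unfolding Lam_def by (simp_all add: mat_diag_def)

definition normalized_eigenbasis ::
    "complex mat \<Rightarrow> (nat \<Rightarrow> nat \<Rightarrow> complex) \<Rightarrow> nat \<Rightarrow> complex mat \<Rightarrow> bool" where
  "normalized_eigenbasis x mu m g \<longleftrightarrow> g \<in> carrier_mat m m \<and> invertible_mat g
      \<and> lead x m = g * Lam mu m * mat_inv g \<and> (\<forall>j<m. g $$ (m - 1, j) = 1)"

lemma normalized_eigenbasis_dual_g:
  "\<exists>!g. normalized_eigenbasis x mu m g \<Longrightarrow> normalized_eigenbasis x mu m (dual_g x mu m)"
  unfolding dual_g_def normalized_eigenbasis_def[symmetric] by (rule theI')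

lemma normalized_eigenbasis_eigen:
  assumes "normalized_eigenbasis x mu m g"
  shows "lead x m * g = g * Lam mu m" "mat_inv g * lead x m = Lam mu m * mat_inv g"
proof -
  have g: "g \<in> carrier_mat m m" and inv: "invertible_mat g"
    and A: "lead x m = g * Lam mu m * mat_inv g"
    using assms unfolding normalized_eigenbasis_def by auto
  note gi = invertible_mat_inv[OF g inv]
  have L: "Lam mu m \<in> carrier_mat m m" by simp
  have "lead x m * g = (g * Lam mu m) * (mat_inv g * g)"
    unfolding A by (rule assoc_mult_mat[OF mult_carrier_mat[OF g L] gi(1) g])
  then show "lead x m * g = g * Lam mu m" using gi g L by simp
  have "mat_inv g * lead x m = mat_inv g * (g * (Lam mu m * mat_inv g))"
    unfolding A by (simp add: assoc_mult_mat[OF g L gi(1)])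
  also have "\<dots> = Lam mu m * mat_inv g"
    by (rule mult_mat_inv_cancel_left(2)[OF g inv mult_carrier_mat[OF L gi(1)]])
  finally show "mat_inv g * lead x m = Lam mu m * mat_inv g" .
qed

definition arrow_conj :: "complex mat \<Rightarrow> complex mat \<Rightarrow> nat \<Rightarrow> complex mat" where
  "arrow_conj x g k = diag_one k (mat_inv g) * lead x (Suc k) * diag_one k g"

lemma dual_block_arrow_conj: "dual_block x mu m = arrow_conj x (dual_g x mu m) m"
  unfolding dual_block_def arrow_conj_def diag_one_def Let_def ..

definition dual_c :: "complex mat \<Rightarrow> (nat \<Rightarrow> nat \<Rightarrow> complex) \<Rightarrow> nat \<Rightarrow> nat \<Rightarrow> complex" where
  "dual_c x mu m j = dual_block x mu m $$ (j, m)"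

definition dual_pairing :: "complex mat \<Rightarrow> (nat \<Rightarrow> nat \<Rightarrow> complex) \<Rightarrow> nat \<Rightarrow> complex mat" where
  "dual_pairing x mu m = transpose_mat (dual_g (transpose_mat x) mu m) * dual_g x mu m"

lemma arrow_conj_blocks:
  assumes G: "normalized_eigenbasis x mu k g"
  defines "B \<equiv> arrow_conj x g k"
  shows "B \<in> carrier_mat (Suc k) (Suc k)"
    and "\<And>i j. i < k \<Longrightarrow> j < k \<Longrightarrow> B $$ (i,j) = (if i = j then mu k i else 0)"
    and "\<And>j. j < k \<Longrightarrow> B $$ (k,j) = (\<Sum>l<k. x $$ (k,l) * g $$ (l,j))"
    and "\<And>j. j < k \<Longrightarrow> B $$ (j,k) = (\<Sum>l<k. mat_inv g $$ (j,l) * x $$ (l,k))"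
proof -
  have g: "g \<in> carrier_mat k k" and inv: "invertible_mat g"
    using G unfolding normalized_eigenbasis_def by auto
  note gi = invertible_mat_inv[OF g inv]
  have L: "Lam mu k \<in> carrier_mat k k" by simp
  have "mat_inv g * lead x k * g = Lam mu k * mat_inv g * g"
    using normalized_eigenbasis_eigen(2)[OF G] by simp
  also have "\<dots> = Lam mu k"
    using gi g L by (simp add: assoc_mult_mat[OF L gi(1) g])
  finally have diag: "mat_inv g * lead x k * g = Lam mu k" .
  have B: "B = four_block_mat (Lam mu k) (mat_inv g * mat k 1 (\<lambda>(i,_). x $$ (i,k)))
      (mat 1 k (\<lambda>(_,j). x $$ (k,j)) * g) (mat 1 1 (\<lambda>_. x $$ (k,k)))"
    unfolding B_def arrow_conj_def lead_Suc_four_block[of x k] diag[symmetric]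
    by (rule diag_one_conj_four_block[OF gi(1) g lead_carrier]) auto
  show "B \<in> carrier_mat (Suc k) (Suc k)" unfolding B using L gi g by auto
  show "\<And>i j. i < k \<Longrightarrow> j < k \<Longrightarrow> B $$ (i,j) = (if i = j then mu k i else 0)"
    unfolding B using gi g by (simp add: Lam_def mat_diag_def)
  show "\<And>j. j < k \<Longrightarrow> B $$ (k,j) = (\<Sum>l<k. x $$ (k,l) * g $$ (l,j))"
    and "\<And>j. j < k \<Longrightarrow> B $$ (j,k) = (\<Sum>l<k. mat_inv g $$ (j,l) * x $$ (l,k))"
    unfolding B using gi g by (simp_all add: scalar_prod_def atLeast0LessThan)
qed

lemma arrow_conj_similar:
  assumes G: "normalized_eigenbasis x mu k g"
  shows "lead x (Suc k) * diag_one k g = diag_one k g * arrow_conj x g k"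
    and "char_poly (arrow_conj x g k) = Pk x (Suc k)"
proof -
  have g: "g \<in> carrier_mat k k" and inv: "invertible_mat g"
    using G unfolding normalized_eigenbasis_def by auto
  note gi = invertible_mat_inv[OF g inv]
  note d = diag_one_inverse[OF g inv]
  have dg: "diag_one k g \<in> carrier_mat (Suc k) (Suc k)"
    and dgi: "diag_one k (mat_inv g) \<in> carrier_mat (Suc k) (Suc k)"
    using g gi by auto
  have X: "lead x (Suc k) \<in> carrier_mat (Suc k) (Suc k)" by simp
  have "diag_one k g * arrow_conj x g k = diag_one k g * (diag_one k (mat_inv g) * (lead x (Suc k) * diag_one k g))"
    unfolding arrow_conj_def by (simp add: assoc_mult_mat[OF dgi X dg])
  also have "\<dots> = lead x (Suc k) * diag_one k g"
    using assoc_mult_mat[symmetric, OF dg dgi mult_carrier_mat[OF X dg]] d(1) X dg by simp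
  finally show "lead x (Suc k) * diag_one k g = diag_one k g * arrow_conj x g k" ..
  have "similar_mat (arrow_conj x g k) (lead x (Suc k))"
    by (rule similar_matI[where n = "Suc k" and P = "diag_one k (mat_inv g)" and Q = "diag_one k g"])
      (use dg dgi X d in \<open>auto simp: arrow_conj_def\<close>)
  then show "char_poly (arrow_conj x g k) = Pk x (Suc k)"
    unfolding Pk_def by (rule char_poly_similar)
qed

locale generic_ordered =
  fixes n :: nat and x :: "complex mat" and mu :: "nat \<Rightarrow> nat \<Rightarrow> complex"
  assumes generic: "generic n x" and ordering: "eig_ordering n x mu"
begin

lemma x_carrier: "x \<in> carrier_mat n n"
  using generic unfolding generic_def by auto

lemma mu_bij: "1 \<le> k \<Longrightarrow> k \<le> n \<Longrightarrow> bij_betw (mu k) {..<k} (eigs x k)"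
  using ordering unfolding eig_ordering_def by auto

lemma mu_inj: "1 \<le> k \<Longrightarrow> k \<le> n \<Longrightarrow> inj_on (mu k) {..<k}"
  using mu_bij bij_betw_imp_inj_on by blast

lemma Pk_mu: "1 \<le> k \<Longrightarrow> k \<le> n \<Longrightarrow> i < k \<Longrightarrow> poly (Pk x k) (mu k i) = 0"
  using mu_bij[THEN bij_betwE] unfolding eigs_Pk by blast

lemma Pk_Suc_mu_nonzero:
  assumes k: "1 \<le> k" "Suc k \<le> n" and i: "i < k"
  shows "poly (Pk x (Suc k)) (mu k i) \<noteq> 0"
proof
  assume "poly (Pk x (Suc k)) (mu k i) = 0"
  then have "mu k i \<in> eigs x k \<inter> eigs x (Suc k)"
    using Pk_mu[of k i] k i unfolding eigs_Pk by auto
  moreover have "eigs x k \<inter> eigs x (Suc k) = {}" using generic k unfolding generic_def by auto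
  ultimately show False by blast
qed

lemma Pk_prod:
  assumes k: "1 \<le> k" "k \<le> n"
  shows "Pk x k = (\<Prod>i<k. [:- mu k i, 1:])"
proof -
  obtain as where cp: "Pk x k = (\<Prod>a\<leftarrow>as. [:- a, 1:])" and len: "length as = k"
    using char_poly_factorized[OF lead_carrier[of x k]] unfolding Pk_def by blast
  have set: "eigs x k = set as"
    unfolding eigs_Pk cp poly_prod_list by (auto simp: prod_list_zero_iff)
  moreover have "card (eigs x k) = k" using generic k unfolding generic_def by auto
  ultimately have "distinct as" using len card_distinct by metis
  then have "Pk x k = (\<Prod>a\<in>eigs x k. [:- a, 1:])"
    unfolding cp set by (simp add: prod.distinct_set_conv_list)
  also have "\<dots> = (\<Prod>i<k. [:- mu k i, 1:])"
    using prod.reindex_bij_betw[OF mu_bij[OF k], of "\<lambda>a. [:- a, 1:]"] by simp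
  finally show ?thesis .
qed

lemma poly_Pk: "1 \<le> k \<Longrightarrow> k \<le> n \<Longrightarrow> poly (Pk x k) l = (\<Prod>i<k. l - mu k i)"
  by (simp add: Pk_prod poly_prod)

lemma poly_pderiv_Pk: "1 \<le> k \<Longrightarrow> k \<le> n \<Longrightarrow> j < k \<Longrightarrow>
    poly (pderiv (Pk x k)) (mu k j) = (\<Prod>i\<in>{..<k}-{j}. mu k j - mu k i)"
  by (simp add: Pk_prod poly_pderiv_prod_linear)

lemma poly_pderiv_Pk_nonzero:
  assumes "1 \<le> k" "k \<le> n" "j < k"
  shows "poly (pderiv (Pk x k)) (mu k j) \<noteq> 0"
  using mu_inj[OF assms(1,2)] assms by (auto simp: poly_pderiv_Pk[OF assms] inj_on_def)

lemma arrow_matrix_arrow_conj: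
  assumes k: "1 \<le> k" "Suc k \<le> n" and G: "normalized_eigenbasis x mu k g"
  shows "arrow_matrix k (arrow_conj x g k) (mu k) (mu (Suc k))"
proof
  note cp = arrow_conj_similar(2)[OF G]
  show "arrow_conj x g k \<in> carrier_mat (Suc k) (Suc k)"
    and "\<And>i j. i < k \<Longrightarrow> j < k \<Longrightarrow> arrow_conj x g k $$ (i,j) = (if i = j then mu k i else 0)"
    by (rule arrow_conj_blocks[OF G])+
  show "\<And>j. j < Suc k \<Longrightarrow> poly (char_poly (arrow_conj x g k)) (mu (Suc k) j) = 0"
    unfolding cp using Pk_mu k by simp
  show "\<And>j. j < Suc k \<Longrightarrow> poly (pderiv (char_poly (arrow_conj x g k))) (mu (Suc k) j) \<noteq> 0"
    unfolding cp using poly_pderiv_Pk_nonzero k by simp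
  show "\<And>i j. i < k \<Longrightarrow> j < Suc k \<Longrightarrow> mu (Suc k) j \<noteq> mu k i"
    using Pk_Suc_mu_nonzero[OF k] Pk_mu[of "Suc k"] k by fastforce
  show "inj_on (mu (Suc k)) {..<Suc k}" using mu_inj k by simp
qed

lemma normalized_eigenbasis_Suc:
  assumes k: "1 \<le> k" "Suc k \<le> n" and G: "normalized_eigenbasis x mu k g"
  shows "normalized_eigenbasis x mu (Suc k)
           (diag_one k g * arrow_matrix.right_eigvecs k (arrow_conj x g k) (mu k) (mu (Suc k)))"
proof -
  interpret A: arrow_matrix k "arrow_conj x g k" "mu k" "mu (Suc k)"
    by (rule arrow_matrix_arrow_conj[OF k G])
  let ?B = "arrow_conj x g k" and ?V = A.right_eigvecs
  define H where "H = mat_diag (Suc k) (\<lambda>j. inverse (A.pairing j)) * A.left_eigvecs"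
  have g: "g \<in> carrier_mat k k" and inv: "invertible_mat g"
    using G unfolding normalized_eigenbasis_def by auto
  note d = diag_one_inverse[OF g inv]
  have dg: "diag_one k g \<in> carrier_mat (Suc k) (Suc k)"
    and dgi: "diag_one k (mat_inv g) \<in> carrier_mat (Suc k) (Suc k)"
    using g invertible_mat_inv[OF g inv] by auto
  have V: "?V \<in> carrier_mat (Suc k) (Suc k)" and B: "?B \<in> carrier_mat (Suc k) (Suc k)"
    and H: "H \<in> carrier_mat (Suc k) (Suc k)"
    using A.carrier mult_carrier_mat[OF mat_diag_dim A.left_eigvecs_carrier] unfolding H_def by auto
  have dgV: "diag_one k g * ?V \<in> carrier_mat (Suc k) (Suc k)" using dg V by simp
  have "(diag_one k g * ?V) * (H * diag_one k (mat_inv g))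
      = diag_one k g * ((?V * H) * diag_one k (mat_inv g))"
    using dg dgi V H by (simp add: assoc_mult_mat[of _ "Suc k" "Suc k" _ "Suc k" _ "Suc k"])
  also have "\<dots> = 1\<^sub>m (Suc k)"
    using A.right_eigvecs_inverse d(1) dgi unfolding H_def by simp
  finally have inverse: "(diag_one k g * ?V) * (H * diag_one k (mat_inv g)) = 1\<^sub>m (Suc k)" .
  have "lead x (Suc k) * (diag_one k g * ?V) = (diag_one k g * ?B) * ?V"
    unfolding arrow_conj_similar(1)[OF G, symmetric] by (rule assoc_mult_mat[symmetric, OF lead_carrier dg V])
  also have "\<dots> = diag_one k g * (?V * mat_diag (Suc k) (mu (Suc k)))"
    unfolding A.right_eigvecs_eigen[symmetric] by (rule assoc_mult_mat[OF dg B V])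
  also have "\<dots> = (diag_one k g * ?V) * Lam mu (Suc k)"
    unfolding Lam_def by (rule assoc_mult_mat[symmetric, OF dg V mat_diag_dim])
  finally have eigen: "lead x (Suc k) * (diag_one k g * ?V) = (diag_one k g * ?V) * Lam mu (Suc k)" .
  have last: "(diag_one k g * ?V) $$ (k, j) = 1" if j: "j < Suc k" for j
  proof -
    have "(diag_one k g * ?V) $$ (k, j) = (\<Sum>l<Suc k. diag_one k g $$ (k,l) * ?V $$ (l,j))"
      by (rule index_mult_mat_sum[OF dg V _ j]) simp
    also have "\<dots> = ?V $$ (k,j)" using g by (simp add: diag_one_last_row)
    finally show ?thesis using j by (simp add: A.right_eigvecs_def)
  qed
  show ?thesis
    unfolding normalized_eigenbasis_def
    using diagonalize_by_right_inverse[OF lead_carrier dgV mult_carrier_mat[OF H dgi] Lam_carrier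
        eigen inverse] dgV last by auto
qed

lemma normalized_eigenbasis_unique:
  assumes m: "1 \<le> m" "m \<le> n"
    and G: "normalized_eigenbasis x mu m g" and G': "normalized_eigenbasis x mu m g'"
  shows "g = g'"
proof -
  have g: "g \<in> carrier_mat m m" and inv: "invertible_mat g"
    and g': "g' \<in> carrier_mat m m"
    and last: "\<And>j. j < m \<Longrightarrow> g $$ (m-1,j) = 1" and last': "\<And>j. j < m \<Longrightarrow> g' $$ (m-1,j) = 1"
    using G G' unfolding normalized_eigenbasis_def by auto
  note gi = invertible_mat_inv[OF g inv]
  define M where "M = mat_inv g * g'"
  have M: "M \<in> carrier_mat m m" unfolding M_def using gi g' by simp
  have "Lam mu m * M = M * Lam mu m"
    unfolding M_def
    by (rule intertwiner_commute[OF lead_carrier Lam_carrier g' gi(1)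
          normalized_eigenbasis_eigen(2)[OF G] normalized_eigenbasis_eigen(1)[OF G']])
  then have Md: "M = mat_diag m (\<lambda>j. M $$ (j,j))"
    unfolding Lam_def by (rule commute_mat_diag_imp_diag[OF M _ mu_inj[OF m]])
  have gM: "g * M = g'" unfolding M_def by (rule mult_mat_inv_cancel_left(1)[OF g inv g'])
  have "g' = g * mat_diag m (\<lambda>j. M $$ (j,j))" using gM Md by simp
  then have "g' $$ (m-1, j) = g $$ (m-1, j) * M $$ (j,j)" if "j < m" for j
    using mat_diag_mult_right[OF g] m that by simp
  then have "M $$ (j,j) = 1" if "j < m" for j using last last' that by simp
  then have "mat_diag m (\<lambda>j. M $$ (j,j)) = 1\<^sub>m m"
    unfolding mat_diag_one[symmetric] by (intro eq_matI) (auto simp: mat_diag_def)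
  with Md have "M = 1\<^sub>m m" by simp
  then show ?thesis using gM g by simp
qed

lemma lead_one:
  assumes "1 \<le> n" shows "lead x 1 = Lam mu 1"
proof -
  have "poly (Pk x 1) l = l - x $$ (0,0)" for l
    using poly_char_poly_arrow[of "lead x 1" 0 "\<lambda>_. 0" l] unfolding Pk_def by (simp add: lead_def)
  moreover have "poly (Pk x 1) 0 = - mu 1 0"
    using poly_Pk[of 1 0] assms by simp
  ultimately have "x $$ (0,0) = mu 1 0" by (metis diff_0 neg_equal_iff_equal)
  then show ?thesis by (intro eq_matI) (auto simp: Lam_def mat_diag_def lead_def)
qed

lemma normalized_eigenbasis_exists: "1 \<le> m \<Longrightarrow> m \<le> n \<Longrightarrow> \<exists>g. normalized_eigenbasis x mu m g"
proof (induction m)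
  case (Suc k)
  show ?case
  proof (cases "k = 0")
    case True
    have one: "1\<^sub>m 1 * 1\<^sub>m 1 = (1\<^sub>m 1 :: complex mat)" by simp
    have "lead x 1 * 1\<^sub>m 1 = 1\<^sub>m 1 * Lam mu 1" using lead_one Suc.prems True by simp
    from diagonalize_by_right_inverse[OF lead_carrier one_carrier_mat one_carrier_mat Lam_carrier
        this one]
    have "normalized_eigenbasis x mu 1 (1\<^sub>m 1)" unfolding normalized_eigenbasis_def by simp
    then show ?thesis using True by auto
  next
    case False
    then have k: "1 \<le> k" "Suc k \<le> n" using Suc.prems by auto
    with Suc.IH obtain g where "normalized_eigenbasis x mu k g" by auto
    with normalized_eigenbasis_Suc[OF k] show ?thesis by blast
  qed
qed simp

lemma dual_g_normalized_eigenbasis: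
  assumes "1 \<le> m" "m \<le> n"
  shows "normalized_eigenbasis x mu m (dual_g x mu m)"
  using normalized_eigenbasis_dual_g normalized_eigenbasis_exists[OF assms]
    normalized_eigenbasis_unique[OF assms] by blast

section \<open>Dual coordinates of the transpose\<close>

lemma generic_ordered_transpose: "generic_ordered n (transpose_mat x) mu"
  using generic_transpose[OF generic] eig_ordering_transpose[OF generic ordering]
  by unfold_locales

lemma dual_b_mult_dual_c:
  assumes m: "1 \<le> m" "Suc m \<le> n" and j: "j < m"
  shows "dual_b x mu m j * dual_c x mu m j
    = - poly (Pk x (Suc m)) (mu m j) / poly (pderiv (Pk x m)) (mu m j)"
proof -
  have G: "normalized_eigenbasis x mu m (dual_g x mu m)"
    using dual_g_normalized_eigenbasis m by simp
  note B = arrow_conj_blocks[OF G]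
  have "dual_b x mu m j * dual_c x mu m j * poly (pderiv (Pk x m)) (mu m j)
      = - poly (Pk x (Suc m)) (mu m j)"
    using poly_char_poly_arrow_diag_entry[OF B(1,2) j] m j
    unfolding dual_b_def dual_c_def dual_block_arrow_conj arrow_conj_similar(2)[OF G]
    by (simp add: poly_pderiv_Pk)
  then show ?thesis using poly_pderiv_Pk_nonzero m j by (simp add: field_simps)
qed

lemma dual_b_nonzero:
  assumes "1 \<le> m" "Suc m \<le> n" "j < m"
  shows "dual_b x mu m j \<noteq> 0"
  using dual_b_mult_dual_c[OF assms] Pk_Suc_mu_nonzero[OF assms] poly_pderiv_Pk_nonzero[of m j] assms
  by auto

lemma transpose_dual_g_transpose_left_eigen:
  assumes m: "1 \<le> m" "m \<le> n"
  defines "h \<equiv> dual_g (transpose_mat x) mu m"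
  shows "transpose_mat h * lead x m = Lam mu m * transpose_mat h"
proof -
  interpret T: generic_ordered n "transpose_mat x" mu by (rule generic_ordered_transpose)
  have H: "normalized_eigenbasis (transpose_mat x) mu m h"
    unfolding h_def by (rule T.dual_g_normalized_eigenbasis[OF m])
  then have h: "h \<in> carrier_mat m m" unfolding normalized_eigenbasis_def by auto
  have "transpose_mat (lead (transpose_mat x) m * h) = transpose_mat (h * Lam mu m)"
    using normalized_eigenbasis_eigen(1)[OF H] by simp
  moreover have "transpose_mat (Lam mu m) = Lam mu m"
    by (rule eq_matI) (auto simp: Lam_def mat_diag_def)
  ultimately show ?thesis
    using transpose_mult[OF transpose_carrier_mat[THEN iffD2, OF lead_carrier] h]
      transpose_mult[OF h Lam_carrier] lead_transpose[OF x_carrier m(2)]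
    by simp
qed

lemma dual_pairing_diag:
  assumes m: "1 \<le> m" "m \<le> n"
  shows "dual_pairing x mu m = mat_diag m (\<lambda>j. dual_pairing x mu m $$ (j,j))"
proof -
  interpret T: generic_ordered n "transpose_mat x" mu by (rule generic_ordered_transpose)
  have G: "normalized_eigenbasis x mu m (dual_g x mu m)"
    and H: "normalized_eigenbasis (transpose_mat x) mu m (dual_g (transpose_mat x) mu m)"
    using dual_g_normalized_eigenbasis[OF m] T.dual_g_normalized_eigenbasis[OF m] by auto
  then have g: "dual_g x mu m \<in> carrier_mat m m"
    and h: "transpose_mat (dual_g (transpose_mat x) mu m) \<in> carrier_mat m m"
    unfolding normalized_eigenbasis_def by auto
  have comm: "Lam mu m * dual_pairing x mu m = dual_pairing x mu m * Lam mu m"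
    unfolding dual_pairing_def
    by (rule intertwiner_commute[OF lead_carrier Lam_carrier g h
          transpose_dual_g_transpose_left_eigen[OF m] normalized_eigenbasis_eigen(1)[OF G]])
  have "dual_pairing x mu m \<in> carrier_mat m m"
    unfolding dual_pairing_def by (rule mult_carrier_mat[OF h g])
  from commute_mat_diag_imp_diag[OF this comm[unfolded Lam_def] mu_inj[OF m]] show ?thesis .
qed

lemma dual_b_transpose:
  assumes m: "1 \<le> m" "Suc m \<le> n" and j: "j < m"
  shows "dual_b (transpose_mat x) mu m j = dual_pairing x mu m $$ (j,j) * dual_c x mu m j"
proof -
  interpret T: generic_ordered n "transpose_mat x" mu by (rule generic_ordered_transpose)
  let ?g = "dual_g x mu m" and ?h = "dual_g (transpose_mat x) mu m" and ?D = "dual_pairing x mu m"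
  have mn: "m \<le> n" using m by simp
  have G: "normalized_eigenbasis x mu m ?g"
    and H: "normalized_eigenbasis (transpose_mat x) mu m ?h"
    using dual_g_normalized_eigenbasis[OF m(1) mn] T.dual_g_normalized_eigenbasis[OF m(1) mn] .
  then have g: "?g \<in> carrier_mat m m" and inv: "invertible_mat ?g" and h: "?h \<in> carrier_mat m m"
    unfolding normalized_eigenbasis_def by auto
  note gi = invertible_mat_inv[OF g inv]
  have "transpose_mat ?h = (transpose_mat ?h * ?g) * mat_inv ?g"
    using assoc_mult_mat[OF transpose_carrier_mat[THEN iffD2, OF h] g gi(1)] gi(2) h by simp
  also have "\<dots> = mat_diag m (\<lambda>i. ?D $$ (i,i)) * mat_inv ?g"
    using dual_pairing_diag[OF m(1) mn] unfolding dual_pairing_def by simp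
  finally have hT: "transpose_mat ?h = mat_diag m (\<lambda>i. ?D $$ (i,i)) * mat_inv ?g" .
  have h_entry: "?h $$ (l,j) = ?D $$ (j,j) * mat_inv ?g $$ (j,l)" if l: "l < m" for l
  proof -
    have "?h $$ (l,j) = transpose_mat ?h $$ (j,l)" using h l j by simp
    then show ?thesis unfolding hT using mat_diag_mult_left[OF gi(1)] l j by simp
  qed
  have "dual_b (transpose_mat x) mu m j = (\<Sum>l<m. transpose_mat x $$ (m,l) * ?h $$ (l,j))"
    unfolding dual_b_def dual_block_arrow_conj by (rule arrow_conj_blocks(3)[OF H j])
  also have "\<dots> = ?D $$ (j,j) * (\<Sum>l<m. mat_inv ?g $$ (j,l) * x $$ (l,m))"
    unfolding sum_distrib_left
    by (rule sum.cong) (use m x_carrier in \<open>auto simp: h_entry\<close>)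
  also have "(\<Sum>l<m. mat_inv ?g $$ (j,l) * x $$ (l,m)) = dual_c x mu m j"
    unfolding dual_c_def dual_block_arrow_conj by (rule arrow_conj_blocks(4)[OF G j, symmetric])
  finally show ?thesis .
qed

text \<open>At level p+1, the dual pairing is the pairing of the explicit left and right eigenvectors of
  the arrow matrix of level p: conjugating by diag(g_p, 1) turns the rows of the transposed
  eigenbasis into normalized left eigenvectors of that arrow matrix.\<close>
lemma dual_pairing_Suc:
  assumes p: "1 \<le> p" "Suc p \<le> n"
  shows "dual_pairing x mu (Suc p)
    = mat_diag (Suc p) (arrow_matrix.pairing p (arrow_conj x (dual_g x mu p) p) (mu p) (mu (Suc p)))"
proof -
  interpret T: generic_ordered n "transpose_mat x" mu by (rule generic_ordered_transpose)
  let ?g' = "dual_g x mu p"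
  let ?B = "arrow_conj x ?g' p"
  let ?h = "dual_g (transpose_mat x) mu (Suc p)"
  have G': "normalized_eigenbasis x mu p ?g'" using dual_g_normalized_eigenbasis p by simp
  interpret A: arrow_matrix p ?B "mu p" "mu (Suc p)" by (rule arrow_matrix_arrow_conj[OF p G'])
  have g': "?g' \<in> carrier_mat p p" using G' unfolding normalized_eigenbasis_def by auto
  then have dg: "diag_one p ?g' \<in> carrier_mat (Suc p) (Suc p)" by simp
  have H: "normalized_eigenbasis (transpose_mat x) mu (Suc p) ?h"
    using T.dual_g_normalized_eigenbasis p by simp
  then have h: "?h \<in> carrier_mat (Suc p) (Suc p)" and h_last: "\<And>j. j < Suc p \<Longrightarrow> ?h $$ (p,j) = 1"
    unfolding normalized_eigenbasis_def by auto
  have hT: "transpose_mat ?h \<in> carrier_mat (Suc p) (Suc p)" using h by simp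
  have X: "lead x (Suc p) \<in> carrier_mat (Suc p) (Suc p)" by simp
  have g: "dual_g x mu (Suc p) = diag_one p ?g' * A.right_eigvecs"
    using normalized_eigenbasis_unique[of "Suc p"] dual_g_normalized_eigenbasis[of "Suc p"]
      normalized_eigenbasis_Suc[OF p G'] p by simp
  define Y where "Y = transpose_mat ?h * diag_one p ?g'"
  have Y: "Y \<in> carrier_mat (Suc p) (Suc p)" unfolding Y_def using hT dg by simp
  have eig: "transpose_mat ?h * lead x (Suc p) = Lam mu (Suc p) * transpose_mat ?h"
    using transpose_dual_g_transpose_left_eigen[of "Suc p"] p by simp
  have "Y * ?B = transpose_mat ?h * (lead x (Suc p) * diag_one p ?g')"
    unfolding Y_def arrow_conj_similar(1)[OF G'] by (rule assoc_mult_mat[OF hT dg A.carrier])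
  also have "\<dots> = (Lam mu (Suc p) * transpose_mat ?h) * diag_one p ?g'"
    unfolding eig[symmetric] by (rule assoc_mult_mat[symmetric, OF hT X dg])
  also have "\<dots> = mat_diag (Suc p) (mu (Suc p)) * Y"
    unfolding Y_def Lam_def by (rule assoc_mult_mat[OF mat_diag_dim hT dg])
  finally have YB: "Y * ?B = mat_diag (Suc p) (mu (Suc p)) * Y" .
  have Y_last: "Y $$ (j,p) = 1" if j: "j < Suc p" for j
  proof -
    have "Y $$ (j,p) = (\<Sum>l<Suc p. transpose_mat ?h $$ (j,l) * diag_one p ?g' $$ (l,p))"
      unfolding Y_def by (rule index_mult_mat_sum[OF hT dg j]) simp
    also have "\<dots> = ?h $$ (p,j)" using g' h j by (simp add: diag_one_last_col)
    finally show ?thesis using h_last j by simp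
  qed
  have "dual_pairing x mu (Suc p) = Y * A.right_eigvecs"
    unfolding dual_pairing_def g Y_def by (rule assoc_mult_mat[symmetric, OF hT dg A.right_eigvecs_carrier])
  also have "Y = A.left_eigvecs" by (rule A.left_eigvecs_unique[OF Y YB Y_last])
  finally show ?thesis by (simp add: A.left_right_eigvecs)
qed

lemma pairing_arrow_conj_eq_Pi_mat:
  assumes p: "1 \<le> p" "Suc p \<le> n" and j: "j < Suc p"
  shows "arrow_matrix.pairing p (arrow_conj x (dual_g x mu p) p) (mu p) (mu (Suc p)) j
    = Pi_mat mu (Suc p) $$ (j,j)"
proof -
  let ?B = "arrow_conj x (dual_g x mu p) p"
  have G': "normalized_eigenbasis x mu p (dual_g x mu p)" using dual_g_normalized_eigenbasis p by simp
  interpret A: arrow_matrix p ?B "mu p" "mu (Suc p)" by (rule arrow_matrix_arrow_conj[OF p G'])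
  have summand: "?B $$ (p,i) * ?B $$ (i,p) / (mu (Suc p) j - mu p i)^2
      = - ((\<Prod>k<Suc p. mu p i - mu (Suc p) k)
           / ((mu (Suc p) j - mu p i)^2 * (\<Prod>k\<in>{..<p}-{i}. mu p i - mu p k)))"
    if i: "i < p" for i
  proof -
    have "(\<Prod>k\<in>{..<p}-{i}. mu p i - mu p k) \<noteq> 0"
      using mu_inj[of p] p i by (auto simp: inj_on_def)
    moreover have "?B $$ (p,i) * ?B $$ (i,p) * (\<Prod>k\<in>{..<p}-{i}. mu p i - mu p k)
        = - (\<Prod>k<Suc p. mu p i - mu (Suc p) k)"
      using poly_char_poly_arrow_diag_entry[OF A.carrier A.diag i] arrow_conj_similar(2)[OF G']
        poly_Pk[of "Suc p"] p by simp
    moreover have "mu (Suc p) j - mu p i \<noteq> 0" using A.separated[OF i j] by simp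
    ultimately show ?thesis by (simp add: field_simps)
  qed
  show ?thesis unfolding A.pairing_def Pi_mat_def using j by (simp add: summand sum_negf mat_diag_def)
qed

lemma Pi_mat_dual_pairing:
  assumes m: "1 \<le> m" "m \<le> n"
  shows "Pi_mat mu m = mat_diag m (\<lambda>j. dual_pairing x mu m $$ (j,j))"
proof (cases "m = 1")
  case True
  interpret T: generic_ordered n "transpose_mat x" mu by (rule generic_ordered_transpose)
  have "normalized_eigenbasis x mu 1 (dual_g x mu 1)"
    and "normalized_eigenbasis (transpose_mat x) mu 1 (dual_g (transpose_mat x) mu 1)"
    using dual_g_normalized_eigenbasis T.dual_g_normalized_eigenbasis m True by auto
  then have "dual_pairing x mu 1 $$ (0,0) = 1"
    unfolding dual_pairing_def normalized_eigenbasis_def by (auto simp: scalar_prod_def)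
  then show ?thesis using True by (intro eq_matI) (auto simp: Pi_mat_def mat_diag_def)
next
  case False
  then obtain p where p: "m = Suc p" "1 \<le> p" "Suc p \<le> n" using m by (cases m) auto
  show ?thesis
    unfolding p(1) dual_pairing_Suc[OF p(2,3)]
    by (rule eq_matI) (auto simp: mat_diag_def pairing_arrow_conj_eq_Pi_mat[OF p(2,3)] Pi_mat_def)
qed

lemma Sigma_mat_dual:
  assumes m: "1 \<le> m" "Suc m \<le> n"
  shows "Sigma_mat x mu m = mat_diag m (\<lambda>j. dual_b x mu m j * dual_c x mu m j)"
proof -
  have inv: "mat_inv (poly_Lam (pderiv (Pk x m)) mu m)
      = mat_diag m (\<lambda>j. inverse (poly (pderiv (Pk x m)) (mu m j)))"
    unfolding poly_Lam_def by (rule mat_inv_mat_diag) (use poly_pderiv_Pk_nonzero m in auto)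
  show ?thesis
    unfolding Sigma_mat_def inv unfolding poly_Lam_def mat_diag_diag
    by (intro eq_matI) (auto simp: mat_diag_def dual_b_mult_dual_c[OF m] divide_inverse)
qed

end

theorem mainTheorem3:
  fixes n m :: nat and x :: "complex mat" and mu :: "nat \<Rightarrow> nat \<Rightarrow> complex"
  assumes "2 \<le> n"
    and "generic n x"
    and "eig_ordering n x mu"
    and "1 \<le> m" and "m \<le> n - 1"
  shows "mat_diag m (dual_b (transpose_mat x) mu m)
           = Pi_mat mu m * mat_inv (mat_diag m (dual_b x mu m)) * Sigma_mat x mu m"
proof -
  interpret generic_ordered n x mu using assms(2,3) by unfold_locales
  have m: "1 \<le> m" "Suc m \<le> n" using assms(1,4,5) by auto
  have b: "\<And>j. j < m \<Longrightarrow> dual_b x mu m j \<noteq> 0" by (rule dual_b_nonzero[OF m])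
  have inv: "mat_inv (mat_diag m (dual_b x mu m)) = mat_diag m (\<lambda>j. inverse (dual_b x mu m j))"
    by (rule mat_inv_mat_diag[OF b])
  show ?thesis
    unfolding Pi_mat_dual_pairing[OF m(1) Suc_leD[OF m(2)]] inv Sigma_mat_dual[OF m] mat_diag_diag
    by (rule eq_matI) (auto simp: mat_diag_def dual_b_transpose[OF m] b)
qed

end
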